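(* Let $\Pi\subseteq\mathsf{pGCL}$ and $\Xi\subseteq\mathbb{E}$, and let $\mathfrak{C}$ be a verification condition provider. (1) If $\mathfrak{C}$ is demonically complete w.r.t. $(\Pi,\Xi)$ and $\mathrm{trans}^{\preceq}_{\mathrm{dwp}}$ preserves $\mathfrak{C}$, then for all $C\in\Pi$ and $f\in\Xi$ there exist invariant annotations for the loops of $C$ such that for all $C'\in\mathsf{pGCL}$: $C'\multimap\mathrm{trans}^{\preceq}_{\mathrm{dwp}}[\![C]\!](f)$ implies $\mathrm{dwp}[\![C]\!](f)=\mathrm{dwp}[\![C']\!](f)$. (2) If $\mathfrak{C}$ is angelically complete w.r.t. $(\Pi,\Xi)$ and $\mathrm{trans}^{\succeq}_{\mathrm{awp}}$ preserves $\mathfrak{C}$, then for every $C\in\Pi$ and $f\in\Xi$ there exist invariant annotations for $C$ such that for all $C'\in\mathsf{pGCL}$: $C'\multimap\mathrm{trans}^{\succeq}_{\mathrm{awp}}[\![C]\!](f)$ implies $\mathrm{awp}[\![C]\!](f)=\mathrm{awp}[\![C']\!](f)$.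
   Context: States: fix a countably infinite set of program variables with values in $\mathbb{Q}_{\ge 0}$; a state is a map $\sigma$ from variables to $\mathbb{Q}_{\ge0}$ which is $0$ for all but finitely many variables; $\mathsf{States}$ is the set of states. A predicate is a map $\varphi:\mathsf{States}\to\{\mathsf{true},\mathsf{false}\}$; $\varphi\models\psi$ means every state satisfying $\varphi$ satisfies $\psi$; $\models\varphi$ means $\varphi$ holds in every state; $\varphi\Rightarrow\psi$ is the usual implication. Expectations: $\mathbb{E}$ is the set of maps $\mathsf{States}\to[0,\infty]$, ordered pointwise; $+,\cdot$ pointwise with $0\cdot\infty=0$; $\sqcap,\sqcup$ pointwise min/max; $[\varphi]$ Iverson bracket; $(\varphi\to g)(\sigma)=g(\sigma)$ if $\sigma\models\varphi$, else $\infty$; $f[x/E](\sigma)=f(\sigma[x\mapsto E(\sigma)])$. Programs of $\mathsf{pGCL}$: $C ::= \mathtt{skip} \mid x:=E \mid C;C \mid \mathtt{if}\ \varphi_1\to C\ \square\ \varphi_2\to C \mid \{C\}[p]\{C\} \mid \mathtt{while}(\varphi)\{C\}[I]$, where $E:\mathsf{States}\to\mathbb{Q}_{\ge0}$, $p:\mathsf{States}\to[0,1]$, in every guarded choice $\varphi_1\vee\varphi_2$ is valid, and every loop carries an invariant annotation $I\in\mathbb{E}$. Weakest preexpectations for $\mathcal{T}\in\{\mathrm{dwp},\mathrm{awp}\}$: $\mathcal{T}[\![\mathtt{skip}]\!](f)=f$; $\mathcal{T}[\![x:=E]\!](f)=f[x/E]$; $\mathcal{T}[\![C_1;C_2]\!](f)=\mathcal{T}[\![C_1]\!](\mathcal{T}[\![C_2]\!](f))$;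 $\mathrm{dwp}$ of a guarded choice: $(\varphi_1\to\mathrm{dwp}[\![C_1]\!](f))\sqcap(\varphi_2\to\mathrm{dwp}[\![C_2]\!](f))$; $\mathrm{awp}$ of a guarded choice: $[\varphi_1]\cdot\mathrm{awp}[\![C_1]\!](f)\sqcup[\varphi_2]\cdot\mathrm{awp}[\![C_2]\!](f)$; $\mathcal{T}[\![\{C_1\}[p]\{C_2\}]\!](f)=p\cdot\mathcal{T}[\![C_1]\!](f)+(1-p)\cdot\mathcal{T}[\![C_2]\!](f)$; loops: least fixpoint of $g\mapsto[\neg\varphi]\cdot f+[\varphi]\cdot\mathcal{T}[\![C']\!](g)$. The auxiliary transformer $\mathcal{T}^*$ follows the same rules except $\mathcal{T}^*[\![\mathtt{while}(\varphi)\{C'\}[I]]\!](f)=I$. Implementation relation $\multimap$: the smallest partial order on $\mathsf{pGCL}$ closed under: if $C_1'\multimap C_1$, $C_2'\multimap C_2$ then $C_1';C_2'\multimap C_1;C_2$ and $\{C_1'\}[p]\{C_2'\}\multimap\{C_1\}[p]\{C_2\}$; if moreover $\varphi_1'\models\varphi_1$, $\varphi_2'\models\varphi_2$, $\models\varphi_1'\vee\varphi_2'$ then $\mathtt{if}\ \varphi_1'\to C_1'\ \square\ \varphi_2'\to C_2'\multimap\mathtt{if}\ \varphi_1\to C_1\ \square\ \varphi_2\to C_2$; if $C'\multimap C$ then $\mathtt{while}(\varphi)\{C'\}\multimap\mathtt{while}(\varphi)\{C\}$. Verification conditions: a verification condition provider is a map $\mathfrak{C}$ assigning to each annotated loop and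 each $f\in\mathbb{E}$ a truth value. $\mathrm{vc}^{\mathfrak{C},\mathcal{T}}[\![C]\!](f)$ is defined inductively: $\mathsf{true}$ for $\mathtt{skip}$ and assignments; $\mathrm{vc}[\![C_1]\!](\mathcal{T}^*[\![C_2]\!](f))\wedge\mathrm{vc}[\![C_2]\!](f)$ for $C_1;C_2$; $\mathrm{vc}[\![C_1]\!](f)\wedge\mathrm{vc}[\![C_2]\!](f)$ for guarded and probabilistic choices; $\mathfrak{C}(\mathtt{while}(\varphi)\{C'\}[I],f)\wedge\mathrm{vc}[\![C']\!](I)$ for loops. $\mathfrak{C}$ yields upper (resp. lower) bounds for $\mathcal{T}$ if for all $C$, $f$, $\mathrm{vc}^{\mathfrak{C},\mathcal{T}}[\![C]\!](f)$ implies $\mathcal{T}[\![C]\!](f)\le\mathcal{T}^*[\![C]\!](f)$ (resp. $\ge$). Completeness: $\mathfrak{C}$ is demonically (resp. angelically) complete w.r.t. $(\Pi,\Xi)$ if (i) $\mathfrak{C}$ yields upper bounds for $\mathrm{dwp}$ (resp. lower bounds for $\mathrm{awp}$) and (ii) for all $C\in\Pi$, $f\in\Xi$, the loops of $C$ can be annotated with invariants such that $\mathrm{vc}^{\mathfrak{C},\mathrm{dwp}}[\![C]\!](f)$ holds and $\mathrm{dwp}[\![C]\!](f)=\mathrm{dwp}^*[\![C]\!](f)$ (resp. $\mathrm{vc}^{\mathfrak{C},\mathrm{awp}}[\![C]\!](f)$ holds and $\mathrm{awp}[\![C]\!](f)=\mathrm{awp}^*[\![C]\!](f)$). Comparison predicates: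 $f\preceq g$ true at $\sigma$ iff $f(\sigma)\le g(\sigma)$; $f\succeq g$ true at $\sigma$ iff $f(\sigma)\ge g(\sigma)$. Transformer $\mathrm{trans}^{\bowtie}_{\mathcal{T}}$: $\mathtt{skip}$ and assignments unchanged; $C_1;C_2\mapsto \mathrm{trans}^{\bowtie}_{\mathcal{T}}[\![C_1]\!](\mathcal{T}^*[\![C_2]\!](f));\mathrm{trans}^{\bowtie}_{\mathcal{T}}[\![C_2]\!](f)$; guarded choice $\mapsto \mathtt{if}\ \psi_1\to\mathrm{trans}^{\bowtie}_{\mathcal{T}}[\![C_1]\!](f)\ \square\ \psi_2\to\mathrm{trans}^{\bowtie}_{\mathcal{T}}[\![C_2]\!](f)$ with $\psi_1=\varphi_1\wedge(\varphi_2\Rightarrow \mathcal{T}^*[\![C_1]\!](f)\bowtie\mathcal{T}^*[\![C_2]\!](f))$, $\psi_2=\varphi_2\wedge(\varphi_1\Rightarrow \mathcal{T}^*[\![C_2]\!](f)\bowtie\mathcal{T}^*[\![C_1]\!](f))$; probabilistic choice transformed branchwise with the same $f$; $\mathtt{while}(\varphi)\{C'\}[I]\mapsto\mathtt{while}(\varphi)\{\mathrm{trans}^{\bowtie}_{\mathcal{T}}[\![C']\!](I)\}[I]$. Preservation: $\mathrm{trans}^{\preceq}_{\mathrm{dwp}}$ preserves $\mathfrak{C}$ if for all $C,C'$, $f$: $\mathrm{vc}^{\mathfrak{C},\mathrm{dwp}}[\![C]\!](f)$ and $C'\multimap\mathrm{trans}^{\preceq}_{\mathrm{dwp}}[\![C]\!](f)$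 imply $\mathrm{vc}^{\mathfrak{C},\mathrm{dwp}}[\![C']\!](f)$; analogously for $\mathrm{trans}^{\succeq}_{\mathrm{awp}}$ with $\mathrm{awp}$. *)

theory Defs
  imports "HOL-Library.Extended_Nonnegative_Real"
begin

typedef qnn = "{q :: rat. 0 \<le> q}"
  by auto

definition qnn_zero :: qnn where "qnn_zero = Abs_qnn 0"

type_synonym var = nat

typedef state = "{\<sigma> :: var \<Rightarrow> qnn. finite {x. \<sigma> x \<noteq> qnn_zero}}"
  by (rule exI[of _ "\<lambda>_. qnn_zero"]) simp

type_synonym pred = "state \<Rightarrow> bool"
type_synonym expect = "state \<Rightarrow> ennreal"
type_synonym aexp = "state \<Rightarrow> qnn"

definition upd :: "state \<Rightarrow> var \<Rightarrow> qnn \<Rightarrow> state" where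
  "upd \<sigma> x v = Abs_state ((Rep_state \<sigma>)(x := v))"

definition iv :: "pred \<Rightarrow> expect" where
  "iv \<phi> = (\<lambda>s. if \<phi> s then 1 else 0)"

definition guard_to :: "pred \<Rightarrow> expect \<Rightarrow> expect" where
  "guard_to \<phi> g = (\<lambda>s. if \<phi> s then g s else \<infinity>)"

definition subst :: "expect \<Rightarrow> var \<Rightarrow> aexp \<Rightarrow> expect" where
  "subst f x E = (\<lambda>s. f (upd s x (E s)))"

definition valid :: "pred \<Rightarrow> bool" where
  "valid \<phi> \<longleftrightarrow> (\<forall>s. \<phi> s)"

definition entails :: "pred \<Rightarrow> pred \<Rightarrow> bool" where
  "entails \<phi> \<psi> \<longleftrightarrow> (\<forall>s. \<phi> s \<longrightarrow> \<psi> s)"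

datatype pgcl =
    Skip
  | Assign var aexp
  | Seq pgcl pgcl
  | If pred pgcl pred pgcl
  | PChoice pgcl "state \<Rightarrow> real" pgcl
  | While pred pgcl expect  (* guard, body, invariant annotation *)

text \<open>Membership in pGCL: probabilities in [0,1], guarded choices exhaustive.\<close>
fun wf :: "pgcl \<Rightarrow> bool" where
  "wf Skip = True"
| "wf (Assign x E) = True"
| "wf (Seq C1 C2) = (wf C1 \<and> wf C2)"
| "wf (If \<phi>1 C1 \<phi>2 C2) = (valid (\<lambda>s. \<phi>1 s \<or> \<phi>2 s) \<and> wf C1 \<and> wf C2)"
| "wf (PChoice C1 p C2) = ((\<forall>s. 0 \<le> p s \<and> p s \<le> 1) \<and> wf C1 \<and> wf C2)"
| "wf (While \<phi> C I) = wf C"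

primrec dwp :: "pgcl \<Rightarrow> expect \<Rightarrow> expect" where
  "dwp Skip f = f"
| "dwp (Assign x E) f = subst f x E"
| "dwp (Seq C1 C2) f = dwp C1 (dwp C2 f)"
| "dwp (If \<phi>1 C1 \<phi>2 C2) f =
     (\<lambda>s. min (guard_to \<phi>1 (dwp C1 f) s) (guard_to \<phi>2 (dwp C2 f) s))"
| "dwp (PChoice C1 p C2) f =
     (\<lambda>s. ennreal (p s) * dwp C1 f s + ennreal (1 - p s) * dwp C2 f s)"
| "dwp (While \<phi> C I) f =
     lfp (\<lambda>g s. iv (\<lambda>t. \<not> \<phi> t) s * f s + iv \<phi> s * dwp C g s)"

primrec awp :: "pgcl \<Rightarrow> expect \<Rightarrow> expect" where
  "awp Skip f = f"
| "awp (Assign x E) f = subst f x E"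
| "awp (Seq C1 C2) f = awp C1 (awp C2 f)"
| "awp (If \<phi>1 C1 \<phi>2 C2) f =
     (\<lambda>s. max (iv \<phi>1 s * awp C1 f s) (iv \<phi>2 s * awp C2 f s))"
| "awp (PChoice C1 p C2) f =
     (\<lambda>s. ennreal (p s) * awp C1 f s + ennreal (1 - p s) * awp C2 f s)"
| "awp (While \<phi> C I) f =
     lfp (\<lambda>g s. iv (\<lambda>t. \<not> \<phi> t) s * f s + iv \<phi> s * awp C g s)"

primrec dwps :: "pgcl \<Rightarrow> expect \<Rightarrow> expect" where
  "dwps Skip f = f"
| "dwps (Assign x E) f = subst f x E"
| "dwps (Seq C1 C2) f = dwps C1 (dwps C2 f)"
| "dwps (If \<phi>1 C1 \<phi>2 C2) f =
     (\<lambda>s. min (guard_to \<phi>1 (dwps C1 f) s) (guard_to \<phi>2 (dwps C2 f) s))"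
| "dwps (PChoice C1 p C2) f =
     (\<lambda>s. ennreal (p s) * dwps C1 f s + ennreal (1 - p s) * dwps C2 f s)"
| "dwps (While \<phi> C I) f = I"

primrec awps :: "pgcl \<Rightarrow> expect \<Rightarrow> expect" where
  "awps Skip f = f"
| "awps (Assign x E) f = subst f x E"
| "awps (Seq C1 C2) f = awps C1 (awps C2 f)"
| "awps (If \<phi>1 C1 \<phi>2 C2) f =
     (\<lambda>s. max (iv \<phi>1 s * awps C1 f s) (iv \<phi>2 s * awps C2 f s))"
| "awps (PChoice C1 p C2) f =
     (\<lambda>s. ennreal (p s) * awps C1 f s + ennreal (1 - p s) * awps C2 f s)"
| "awps (While \<phi> C I) f = I"

inductive impl :: "pgcl \<Rightarrow> pgcl \<Rightarrow> bool" where
  impl_refl: "impl C C"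
| impl_trans: "impl C1 C2 \<Longrightarrow> impl C2 C3 \<Longrightarrow> impl C1 C3"
| impl_seq: "impl C1' C1 \<Longrightarrow> impl C2' C2 \<Longrightarrow> impl (Seq C1' C2') (Seq C1 C2)"
| impl_pchoice: "impl C1' C1 \<Longrightarrow> impl C2' C2 \<Longrightarrow>
     impl (PChoice C1' p C2') (PChoice C1 p C2)"
| impl_if: "impl C1' C1 \<Longrightarrow> impl C2' C2 \<Longrightarrow> entails \<phi>1' \<phi>1 \<Longrightarrow> entails \<phi>2' \<phi>2 \<Longrightarrow>
     valid (\<lambda>s. \<phi>1' s \<or> \<phi>2' s) \<Longrightarrow> impl (If \<phi>1' C1' \<phi>2' C2') (If \<phi>1 C1 \<phi>2 C2)"
| impl_while: "impl C' C \<Longrightarrow> impl (While \<phi> C' I) (While \<phi> C I)"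

text \<open>A verification condition provider: for each annotated loop
  (guard, body, invariant) and each expectation f a truth value.\<close>
type_synonym vcp = "pred \<Rightarrow> pgcl \<Rightarrow> expect \<Rightarrow> expect \<Rightarrow> bool"

primrec vc :: "vcp \<Rightarrow> (pgcl \<Rightarrow> expect \<Rightarrow> expect) \<Rightarrow> pgcl \<Rightarrow> expect \<Rightarrow> bool" where
  "vc \<CC> T Skip f = True"
| "vc \<CC> T (Assign x E) f = True"
| "vc \<CC> T (Seq C1 C2) f = (vc \<CC> T C1 (T C2 f) \<and> vc \<CC> T C2 f)"
| "vc \<CC> T (If \<phi>1 C1 \<phi>2 C2) f = (vc \<CC> T C1 f \<and> vc \<CC> T C2 f)"
| "vc \<CC> T (PChoice C1 p C2) f = (vc \<CC> T C1 f \<and> vc \<CC> T C2 f)"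
| "vc \<CC> T (While \<phi> C I) f = (\<CC> \<phi> C I f \<and> vc \<CC> T C I)"

definition yields_upper_dwp :: "vcp \<Rightarrow> bool" where
  "yields_upper_dwp \<CC> \<longleftrightarrow> (\<forall>C f. wf C \<longrightarrow> vc \<CC> dwps C f \<longrightarrow> dwp C f \<le> dwps C f)"

definition yields_lower_awp :: "vcp \<Rightarrow> bool" where
  "yields_lower_awp \<CC> \<longleftrightarrow> (\<forall>C f. wf C \<longrightarrow> vc \<CC> awps C f \<longrightarrow> awp C f \<ge> awps C f)"

text \<open>D arises from C by (re)choosing the invariant annotations of its loops.\<close>
fun reannot :: "pgcl \<Rightarrow> pgcl \<Rightarrow> bool" where
  "reannot Skip D = (D = Skip)"
| "reannot (Assign x E) D = (D = Assign x E)"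
| "reannot (Seq C1 C2) D = (\<exists>D1 D2. D = Seq D1 D2 \<and> reannot C1 D1 \<and> reannot C2 D2)"
| "reannot (If \<phi>1 C1 \<phi>2 C2) D =
     (\<exists>D1 D2. D = If \<phi>1 D1 \<phi>2 D2 \<and> reannot C1 D1 \<and> reannot C2 D2)"
| "reannot (PChoice C1 p C2) D =
     (\<exists>D1 D2. D = PChoice D1 p D2 \<and> reannot C1 D1 \<and> reannot C2 D2)"
| "reannot (While \<phi> C I) D = (\<exists>D' J. D = While \<phi> D' J \<and> reannot C D')"

definition dem_complete :: "vcp \<Rightarrow> pgcl set \<Rightarrow> expect set \<Rightarrow> bool" where
  "dem_complete \<CC> Progs Exps \<longleftrightarrow> yields_upper_dwp \<CC> \<and>
     (\<forall>C\<in>Progs. \<forall>f\<in>Exps. \<exists>D. reannot C D \<and> vc \<CC> dwps D f \<and> dwp D f = dwps D f)"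

definition ang_complete :: "vcp \<Rightarrow> pgcl set \<Rightarrow> expect set \<Rightarrow> bool" where
  "ang_complete \<CC> Progs Exps \<longleftrightarrow> yields_lower_awp \<CC> \<and>
     (\<forall>C\<in>Progs. \<forall>f\<in>Exps. \<exists>D. reannot C D \<and> vc \<CC> awps D f \<and> awp D f = awps D f)"

primrec trans :: "(pgcl \<Rightarrow> expect \<Rightarrow> expect) \<Rightarrow> (ennreal \<Rightarrow> ennreal \<Rightarrow> bool)
    \<Rightarrow> pgcl \<Rightarrow> expect \<Rightarrow> pgcl" where
  "trans T R Skip f = Skip"
| "trans T R (Assign x E) f = Assign x E"
| "trans T R (Seq C1 C2) f = Seq (trans T R C1 (T C2 f)) (trans T R C2 f)"
| "trans T R (If \<phi>1 C1 \<phi>2 C2) f =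
     If (\<lambda>s. \<phi>1 s \<and> (\<phi>2 s \<longrightarrow> R (T C1 f s) (T C2 f s))) (trans T R C1 f)
        (\<lambda>s. \<phi>2 s \<and> (\<phi>1 s \<longrightarrow> R (T C2 f s) (T C1 f s))) (trans T R C2 f)"
| "trans T R (PChoice C1 p C2) f = PChoice (trans T R C1 f) p (trans T R C2 f)"
| "trans T R (While \<phi> C I) f = While \<phi> (trans T R C I) I"

definition trans_le_dwp :: "pgcl \<Rightarrow> expect \<Rightarrow> pgcl" where
  "trans_le_dwp = trans dwps (\<le>)"

definition trans_ge_awp :: "pgcl \<Rightarrow> expect \<Rightarrow> pgcl" where
  "trans_ge_awp = trans awps (\<ge>)"

definition preserves_dwp :: "vcp \<Rightarrow> bool" where
  "preserves_dwp \<CC> \<longleftrightarrow> (\<forall>C C' f. wf C \<longrightarrow> wf C' \<longrightarrow>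
     vc \<CC> dwps C f \<longrightarrow> impl C' (trans_le_dwp C f) \<longrightarrow> vc \<CC> dwps C' f)"

definition preserves_awp :: "vcp \<Rightarrow> bool" where
  "preserves_awp \<CC> \<longleftrightarrow> (\<forall>C C' f. wf C \<longrightarrow> wf C' \<longrightarrow>
     vc \<CC> awps C f \<longrightarrow> impl C' (trans_ge_awp C f) \<longrightarrow> vc \<CC> awps C' f)"

end

theory Submission
  imports Defs
begin

text \<open>Let D carry the invariants provided by completeness, so that vc holds for D and the
  auxiliary transformer is exact on D. Since the comparison is total, the transformation only
  strengthens guards and keeps them exhaustive, so every C' implementing trans D also implements D;
  implementing resolves nondeterminism, which can only raise dwp (lower awp). Conversely,
  preservation gives vc for C', hence the bound by the auxiliary transformer of C'. That value
  equals the one of D: trans D lets both guards hold only where the two branches have the same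
  auxiliary value, and this property, together with the auxiliary value, survives implementation.\<close>

lemma wf_reannot: "reannot C D \<Longrightarrow> wf C \<Longrightarrow> wf D"
  by (induction C arbitrary: D) auto

lemma loop_lfp_mono:
  assumes "\<And>g. T g \<le> T' g" and "f \<le> f'"
  shows "lfp (\<lambda>g s. iv (\<lambda>t. \<not> \<phi> t) s * f s + iv \<phi> s * T g s)
    \<le> lfp (\<lambda>g s. iv (\<lambda>t. \<not> \<phi> t) s * f' s + iv \<phi> s * T' g s)"
  using assms by (intro lfp_mono le_funI add_mono mult_left_mono) (auto simp: le_fun_def)

lemma dwp_mono: "g \<le> h \<Longrightarrow> dwp C g \<le> dwp C h"
proof (induction C arbitrary: g h)
  case (If \<phi>1 C1 \<phi>2 C2)
  then show ?case
    by (fastforce simp: le_fun_def guard_to_def min_le_iff_disj)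
next
  case (While \<phi> C I)
  then show ?case
    by (simp add: loop_lfp_mono)
qed (auto simp: le_fun_def subst_def intro!: add_mono mult_left_mono)

lemma awp_mono: "g \<le> h \<Longrightarrow> awp C g \<le> awp C h"
proof (induction C arbitrary: g h)
  case (If \<phi>1 C1 \<phi>2 C2)
  then have "awp C1 g s \<le> awp C1 h s" "awp C2 g s \<le> awp C2 h s" for s
    by (simp_all add: le_fun_def)
  then show ?case
    by (intro le_funI) (simp del: max.bounded_iff add: max.mono mult_left_mono)
next
  case (While \<phi> C I)
  then show ?case
    by (simp add: loop_lfp_mono)
qed (auto simp: le_fun_def subst_def intro!: add_mono mult_left_mono)

lemma dwp_antimono_impl: "impl C' C \<Longrightarrow> dwp C g \<le> dwp C' g"
proof (induction arbitrary: g rule: impl.induct)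
  case (impl_trans C1 C2 C3)
  then show ?case by (meson order_trans)
next
  case (impl_seq C1' C1 C2' C2)
  then show ?case by simp (meson dwp_mono order_trans)
next
  case (impl_if C1' C1 C2' C2 \<phi>1' \<phi>1 \<phi>2' \<phi>2)
  then show ?case
    by (fastforce simp: le_fun_def guard_to_def entails_def min_le_iff_disj)
next
  case (impl_pchoice C1' C1 C2' C2 p)
  then show ?case
    by (auto simp: le_fun_def intro!: add_mono mult_left_mono)
qed (simp_all add: loop_lfp_mono)

lemma awp_mono_impl: "impl C' C \<Longrightarrow> awp C' g \<le> awp C g"
proof (induction arbitrary: g rule: impl.induct)
  case (impl_trans C1 C2 C3)
  then show ?case by (meson order_trans)
next
  case (impl_seq C1' C1 C2' C2)
  then show ?case by simp (meson awp_mono order_trans)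
next
  case (impl_if C1' C1 C2' C2 \<phi>1' \<phi>1 \<phi>2' \<phi>2)
  then have "iv \<phi>1' s * awp C1' g s \<le> iv \<phi>1 s * awp C1 g s"
    and "iv \<phi>2' s * awp C2' g s \<le> iv \<phi>2 s * awp C2 g s" for s
    by (auto simp: le_fun_def iv_def entails_def)
  then show ?case
    by (intro le_funI) (simp del: max.bounded_iff add: max.mono)
next
  case (impl_pchoice C1' C1 C2' C2 p)
  then show ?case
    by (auto simp: le_fun_def intro!: add_mono mult_left_mono)
qed (simp_all add: loop_lfp_mono)

lemma trans_impl:
  assumes "\<And>a b. R a b \<or> R b a"
  shows "wf C \<Longrightarrow> impl (trans T R C f) C"
proof (induction C arbitrary: f)
  case (If \<phi>1 C1 \<phi>2 C2)
  have "\<not> R b a \<Longrightarrow> R a b" for a b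
    using assms by blast
  with If show ?case
    by (auto simp: entails_def valid_def intro!: impl_if)
qed (auto intro: impl.intros)

lemma dwps_trans: "dwps (trans dwps (\<le>) C f) f = dwps C f"
  by (induction C arbitrary: f) (simp_all, auto simp: guard_to_def min_def fun_eq_iff top_unique)

lemma awps_trans: "awps (trans awps (\<ge>) C f) f = awps C f"
  by (induction C arbitrary: f) (simp_all, auto simp: iv_def max_def fun_eq_iff)

fun branches_agree :: "(pgcl \<Rightarrow> expect \<Rightarrow> expect) \<Rightarrow> pgcl \<Rightarrow> expect \<Rightarrow> bool" where
  "branches_agree T (Seq C1 C2) g = (branches_agree T C1 (T C2 g) \<and> branches_agree T C2 g)"
| "branches_agree T (If \<phi>1 C1 \<phi>2 C2) g =
     ((\<forall>s. \<phi>1 s \<and> \<phi>2 s \<longrightarrow> T C1 g s = T C2 g s) \<and> branches_agree T C1 g \<and> branches_agree T C2 g)"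
| "branches_agree T (PChoice C1 p C2) g = (branches_agree T C1 g \<and> branches_agree T C2 g)"
| "branches_agree T (While \<phi> C I) g = branches_agree T C I"
| "branches_agree T Skip g = True"
| "branches_agree T (Assign x E) g = True"

lemma branches_agree_trans:
  assumes "\<And>C g. T (trans T R C g) g = T C g" and "\<And>a b. R a b \<Longrightarrow> R b a \<Longrightarrow> a = b"
  shows "branches_agree T (trans T R C f) f"
  by (induction C arbitrary: f) (auto simp: assms)

lemma dwps_impl_branches_agree:
  "impl C' C \<Longrightarrow> branches_agree dwps C g \<Longrightarrow> dwps C' g = dwps C g \<and> branches_agree dwps C' g"
proof (induction arbitrary: g rule: impl.induct)
  case (impl_trans C1 C2 C3)
  then show ?case by metis
next
  case (impl_if C1' C1 C2' C2 \<phi>1' \<phi>1 \<phi>2' \<phi>2)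
  then have same: "dwps C1' g = dwps C1 g" "dwps C2' g = dwps C2 g"
    and agree: "\<And>s. \<phi>1 s \<Longrightarrow> \<phi>2 s \<Longrightarrow> dwps C1 g s = dwps C2 g s"
    by auto
  from impl_if.hyps(3-5) have guards: "\<phi>1' s \<longrightarrow> \<phi>1 s" "\<phi>2' s \<longrightarrow> \<phi>2 s" "\<phi>1' s \<or> \<phi>2' s" for s
    by (auto simp: entails_def valid_def)
  then have "dwps (If \<phi>1' C1' \<phi>2' C2') g s = dwps (If \<phi>1 C1 \<phi>2 C2) g s" for s
    using agree[of s] by (auto simp: guard_to_def same)
  with impl_if guards show ?case
    by (auto simp: fun_eq_iff same)
qed auto

lemma awps_impl_branches_agree:
  "impl C' C \<Longrightarrow> branches_agree awps C g \<Longrightarrow> awps C' g = awps C g \<and> branches_agree awps C' g"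
proof (induction arbitrary: g rule: impl.induct)
  case (impl_trans C1 C2 C3)
  then show ?case by metis
next
  case (impl_if C1' C1 C2' C2 \<phi>1' \<phi>1 \<phi>2' \<phi>2)
  then have same: "awps C1' g = awps C1 g" "awps C2' g = awps C2 g"
    and agree: "\<And>s. \<phi>1 s \<Longrightarrow> \<phi>2 s \<Longrightarrow> awps C1 g s = awps C2 g s"
    by auto
  from impl_if.hyps(3-5) have guards: "\<phi>1' s \<longrightarrow> \<phi>1 s" "\<phi>2' s \<longrightarrow> \<phi>2 s" "\<phi>1' s \<or> \<phi>2' s" for s
    by (auto simp: entails_def valid_def)
  then have "awps (If \<phi>1' C1' \<phi>2' C2') g s = awps (If \<phi>1 C1 \<phi>2 C2) g s" for s
    using agree[of s] by (auto simp: iv_def same)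
  with impl_if guards show ?case
    by (auto simp: fun_eq_iff same)
qed auto

lemma dwp_impl_trans_le_dwp_eq:
  assumes "yields_upper_dwp \<CC>" and "preserves_dwp \<CC>"
    and "wf D" and "vc \<CC> dwps D f" and "dwp D f = dwps D f"
    and "wf C'" and "impl C' (trans_le_dwp D f)"
  shows "dwp D f = dwp C' f"
proof (rule antisym)
  have "impl (trans_le_dwp D f) D"
    unfolding trans_le_dwp_def by (rule trans_impl) (auto simp: \<open>wf D\<close>)
  with \<open>impl C' (trans_le_dwp D f)\<close> have "impl C' D"
    by (rule impl.impl_trans)
  then show "dwp D f \<le> dwp C' f"
    by (rule dwp_antimono_impl)
next
  have "vc \<CC> dwps C' f"
    using assms(2-4,6,7) unfolding preserves_dwp_def by blast
  then have bound: "dwp C' f \<le> dwps C' f"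
    using assms(1,6) unfolding yields_upper_dwp_def by blast
  have "dwps C' f = dwps D f"
    using dwps_impl_branches_agree[OF assms(7)[unfolded trans_le_dwp_def] branches_agree_trans]
    by (simp add: dwps_trans)
  with bound assms(5) show "dwp C' f \<le> dwp D f"
    by simp
qed

lemma awp_impl_trans_ge_awp_eq:
  assumes "yields_lower_awp \<CC>" and "preserves_awp \<CC>"
    and "wf D" and "vc \<CC> awps D f" and "awp D f = awps D f"
    and "wf C'" and "impl C' (trans_ge_awp D f)"
  shows "awp D f = awp C' f"
proof (rule antisym)
  have "vc \<CC> awps C' f"
    using assms(2-4,6,7) unfolding preserves_awp_def by blast
  then have bound: "awps C' f \<le> awp C' f"
    using assms(1,6) unfolding yields_lower_awp_def by blast
  have "awps C' f = awps D f"
    using awps_impl_branches_agree[OF assms(7)[unfolded trans_ge_awp_def] branches_agree_trans]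
    by (simp add: awps_trans)
  with bound assms(5) show "awp D f \<le> awp C' f"
    by simp
next
  have "impl (trans_ge_awp D f) D"
    unfolding trans_ge_awp_def by (rule trans_impl) (auto simp: \<open>wf D\<close>)
  with \<open>impl C' (trans_ge_awp D f)\<close> have "impl C' D"
    by (rule impl.impl_trans)
  then show "awp C' f \<le> awp D f"
    by (rule awp_mono_impl)
qed

theorem theorem6p7:
  fixes Progs :: "pgcl set" and Exps :: "expect set" and \<CC> :: vcp
  assumes "Progs \<subseteq> {C. wf C}"
  shows "(dem_complete \<CC> Progs Exps \<and> preserves_dwp \<CC> \<longrightarrow>
           (\<forall>C\<in>Progs. \<forall>f\<in>Exps. \<exists>D. reannot C D \<and>
              (\<forall>C'. wf C' \<longrightarrow> impl C' (trans_le_dwp D f) \<longrightarrow> dwp D f = dwp C' f)))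
       \<and> (ang_complete \<CC> Progs Exps \<and> preserves_awp \<CC> \<longrightarrow>
           (\<forall>C\<in>Progs. \<forall>f\<in>Exps. \<exists>D. reannot C D \<and>
              (\<forall>C'. wf C' \<longrightarrow> impl C' (trans_ge_awp D f) \<longrightarrow> awp D f = awp C' f)))"
proof (intro conjI impI ballI)
  fix C f
  assume dem: "dem_complete \<CC> Progs Exps \<and> preserves_dwp \<CC>" and "C \<in> Progs" "f \<in> Exps"
  then obtain D where "reannot C D" "vc \<CC> dwps D f" "dwp D f = dwps D f"
    by (auto simp: dem_complete_def)
  moreover have "wf D"
    using \<open>reannot C D\<close> \<open>C \<in> Progs\<close> assms wf_reannot by blast
  ultimately show "\<exists>D. reannot C D \<and>
      (\<forall>C'. wf C' \<longrightarrow> impl C' (trans_le_dwp D f) \<longrightarrow> dwp D f = dwp C' f)"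
    using dem by (auto simp: dem_complete_def intro: dwp_impl_trans_le_dwp_eq)
next
  fix C f
  assume ang: "ang_complete \<CC> Progs Exps \<and> preserves_awp \<CC>" and "C \<in> Progs" "f \<in> Exps"
  then obtain D where "reannot C D" "vc \<CC> awps D f" "awp D f = awps D f"
    by (auto simp: ang_complete_def)
  moreover have "wf D"
    using \<open>reannot C D\<close> \<open>C \<in> Progs\<close> assms wf_reannot by blast
  ultimately show "\<exists>D. reannot C D \<and>
      (\<forall>C'. wf C' \<longrightarrow> impl C' (trans_ge_awp D f) \<longrightarrow> awp D f = awp C' f)"
    using ang by (auto simp: ang_complete_def intro: awp_impl_trans_ge_awp_eq)
qed

end
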